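(* Let $\mathbf I=\langle I,\vee\rangle$ be a join-semilattice with order $\preceq$ (strict part $\prec$), let $\{\langle A_p,\le_p\rangle: p\in I\}$ be pairwise disjoint posets, and for $p\preceq q$ let $\psi_{pq},\varphi_{pq}:A_p\to A_q$ be monotone maps with $\varphi_{pp}=\psi_{pp}=\mathrm{id}_{A_p}$, $\varphi_{qr}\circ\varphi_{pq}=\varphi_{pr}$ and $\psi_{qr}\circ\psi_{pq}=\psi_{pr}$ for $p\preceq q\preceq r$. On $A:=\biguplus_pA_p$ define $a\le b$ (for $a\in A_p$, $b\in A_q$) iff $\varphi_{ps}(a)\le_s\psi_{qs}(b)$ where $s:=p\vee q$. Then $\le$ is a partial order on $A$ with $\le\cap A_p^2=\le_p$ for every $p\in I$ if and only if the following two conditions hold: (S1) whenever $p\prec q$, $p\prec r$ and $t:=q\vee r$, we have $\varphi_{qt}(\psi_{pq}(a))\le_t\psi_{rt}(\varphi_{pr}(a))$ for all $a\in A_p$; (S2) whenever $p\prec q$, $a,b\in A_p$ and $\varphi_{pq}(a)\le_q\psi_{pq}(b)$, then $a<_pb$. *)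

theory Defs
  imports Main
begin

definition sum_rel ::
  "('i::semilattice_sup \<Rightarrow> 'a set) \<Rightarrow> ('i \<Rightarrow> ('a \<times> 'a) set)
   \<Rightarrow> ('i \<Rightarrow> 'i \<Rightarrow> 'a \<Rightarrow> 'a) \<Rightarrow> ('i \<Rightarrow> 'i \<Rightarrow> 'a \<Rightarrow> 'a) \<Rightarrow> ('a \<times> 'a) set" where
  "sum_rel A leq phi psi =
     {(a, b). \<exists>p q. a \<in> A p \<and> b \<in> A q \<and>
        (phi p (sup p q) a, psi q (sup p q) b) \<in> leq (sup p q)}"

end

theory Submission
  imports Defs
begin

text \<open>The glued order always restricts to \<open>\<le>\<^sub>p\<close> on \<open>A\<^sub>p\<close> (as \<open>\<phi>\<^sub>p\<^sub>p\<close>, \<open>\<psi>\<^sub>p\<^sub>p\<close> are identities) and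
  every element lies between its images under the two families of maps:
  \<open>\<psi>\<^sub>p\<^sub>q a \<le> a \<le> \<phi>\<^sub>p\<^sub>q a\<close>, independently of (S1) and (S2). Hence (S1) is
  transitivity through \<open>a\<close>, and (S2) says that \<open>a \<le> \<phi>\<^sub>p\<^sub>q a \<le> b\<close> forces \<open>a <\<^sub>p b\<close>.
  Conversely, (S1) lets a chain \<open>a \<le> b \<le> c\<close> be pushed up to the join of all three indices,
  where (S2) pulls it back down; and a 2-cycle \<open>a \<le> b \<le> a\<close> across different indices
  would give \<open>\<phi>\<^sub>p\<^sub>s a \<le> \<psi>\<^sub>p\<^sub>s a\<close> for \<open>p < s\<close>, which (S2) forbids.\<close>

locale directed_poset_family =
  fixes A :: "'i::semilattice_sup \<Rightarrow> 'a set"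
    and leq :: "'i \<Rightarrow> ('a \<times> 'a) set"
    and phi psi :: "'i \<Rightarrow> 'i \<Rightarrow> 'a \<Rightarrow> 'a"
  assumes posets: "\<And>p. partial_order_on (A p) (leq p)"
    and disjoint: "\<And>p q. p \<noteq> q \<Longrightarrow> A p \<inter> A q = {}"
    and phi_maps: "\<And>p q a. p \<le> q \<Longrightarrow> a \<in> A p \<Longrightarrow> phi p q a \<in> A q"
    and psi_maps: "\<And>p q a. p \<le> q \<Longrightarrow> a \<in> A p \<Longrightarrow> psi p q a \<in> A q"
    and phi_mono: "\<And>p q a b. p \<le> q \<Longrightarrow> a \<in> A p \<Longrightarrow> b \<in> A p \<Longrightarrow> (a, b) \<in> leq p
                     \<Longrightarrow> (phi p q a, phi p q b) \<in> leq q"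
    and psi_mono: "\<And>p q a b. p \<le> q \<Longrightarrow> a \<in> A p \<Longrightarrow> b \<in> A p \<Longrightarrow> (a, b) \<in> leq p
                     \<Longrightarrow> (psi p q a, psi p q b) \<in> leq q"
    and phi_id: "\<And>p a. a \<in> A p \<Longrightarrow> phi p p a = a"
    and psi_id: "\<And>p a. a \<in> A p \<Longrightarrow> psi p p a = a"
    and phi_comp: "\<And>p q r a. p \<le> q \<Longrightarrow> q \<le> r \<Longrightarrow> a \<in> A p
                     \<Longrightarrow> phi q r (phi p q a) = phi p r a"
    and psi_comp: "\<And>p q r a. p \<le> q \<Longrightarrow> q \<le> r \<Longrightarrow> a \<in> A p
                     \<Longrightarrow> psi q r (psi p q a) = psi p r a"
begin

abbreviation R :: "('a \<times> 'a) set" where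
  "R \<equiv> sum_rel A leq phi psi"

definition interchange :: bool where
  "interchange \<longleftrightarrow> (\<forall>p q r a. p < q \<longrightarrow> p < r \<longrightarrow> a \<in> A p \<longrightarrow>
     (phi q (sup q r) (psi p q a), psi r (sup q r) (phi p r a)) \<in> leq (sup q r))"

definition separating :: bool where
  "separating \<longleftrightarrow> (\<forall>p q a b. p < q \<longrightarrow> a \<in> A p \<longrightarrow> b \<in> A p \<longrightarrow>
     (phi p q a, psi p q b) \<in> leq q \<longrightarrow> (a, b) \<in> leq p \<and> a \<noteq> b)"

lemma index_unique: "a \<in> A p \<Longrightarrow> a \<in> A q \<Longrightarrow> p = q"
  using disjoint by blast

lemma leq_refl: "a \<in> A p \<Longrightarrow> (a, a) \<in> leq p"
  using posets unfolding partial_order_on_def preorder_on_def refl_on_def by blast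

lemma leq_carrier: "(a, b) \<in> leq p \<Longrightarrow> a \<in> A p \<and> b \<in> A p"
  using posets unfolding partial_order_on_def preorder_on_def refl_on_def by blast

lemma leq_trans: "(a, b) \<in> leq p \<Longrightarrow> (b, c) \<in> leq p \<Longrightarrow> (a, c) \<in> leq p"
  using posets unfolding partial_order_on_def preorder_on_def trans_def by blast

lemma leq_antisym: "(a, b) \<in> leq p \<Longrightarrow> (b, a) \<in> leq p \<Longrightarrow> a = b"
  using posets unfolding partial_order_on_def antisym_def by blast

lemma sum_rel_iff:
  assumes "a \<in> A p" and "b \<in> A q"
  shows "(a, b) \<in> R \<longleftrightarrow> (phi p (sup p q) a, psi q (sup p q) b) \<in> leq (sup p q)"
  using assms index_unique unfolding sum_rel_def by blast

lemma sum_rel_below: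
  assumes "p \<le> q" and "a \<in> A p" and "b \<in> A q"
  shows "(a, b) \<in> R \<longleftrightarrow> (phi p q a, b) \<in> leq q"
  using sum_rel_iff[OF assms(2,3)] assms psi_id by (simp add: sup_absorb2)

lemma sum_rel_above:
  assumes "p \<le> q" and "a \<in> A q" and "b \<in> A p"
  shows "(a, b) \<in> R \<longleftrightarrow> (a, psi p q b) \<in> leq q"
  using sum_rel_iff[OF assms(2,3)] assms phi_id by (simp add: sup_absorb1)

lemma sum_rel_phi: "p \<le> q \<Longrightarrow> a \<in> A p \<Longrightarrow> (a, phi p q a) \<in> R"
  by (simp add: sum_rel_below phi_maps leq_refl)

lemma psi_sum_rel: "p \<le> q \<Longrightarrow> a \<in> A p \<Longrightarrow> (psi p q a, a) \<in> R"
  by (simp add: sum_rel_above psi_maps leq_refl)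

lemma sum_rel_restrict: "R \<inter> (A p \<times> A p) = leq p"
  using sum_rel_below[of p p] phi_id leq_carrier by auto

lemma sum_rel_field: "R \<subseteq> (\<Union>p. A p) \<times> (\<Union>p. A p)"
  unfolding sum_rel_def by blast

lemma refl_on_sum_rel: "refl_on (\<Union>p. A p) R"
  using sum_rel_field sum_rel_restrict leq_refl unfolding refl_on_def by blast

lemma interchange_if_trans: "trans R \<Longrightarrow> interchange"
  unfolding interchange_def
proof (intro allI impI)
  fix p q r a
  assume "trans R" and "p < q" and "p < r" and a: "a \<in> A p"
  then have "(psi p q a, phi p r a) \<in> R"
    using psi_sum_rel sum_rel_phi by (meson less_imp_le transD)
  then show "(phi q (sup q r) (psi p q a), psi r (sup q r) (phi p r a)) \<in> leq (sup q r)"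
    using sum_rel_iff[of "psi p q a" q "phi p r a" r] \<open>p < q\<close> \<open>p < r\<close> a psi_maps phi_maps
    by (simp add: less_imp_le)
qed

lemma separating_if_trans_antisym:
  assumes "trans R" and "antisym R"
  shows separating
  unfolding separating_def
proof (intro allI impI)
  fix p q a b
  assume pq: "p < q" and a: "a \<in> A p" and b: "b \<in> A p"
    and le: "(phi p q a, psi p q b) \<in> leq q"
  let ?c = "phi p q a"
  have c: "?c \<in> A q" using phi_maps pq a by simp
  have ac: "(a, ?c) \<in> R" using sum_rel_phi pq a by simp
  have cb: "(?c, b) \<in> R" using sum_rel_above[OF less_imp_le[OF pq] c b] le by simp
  have "(a, b) \<in> R" using assms(1) ac cb by (rule transD)
  then have "(a, b) \<in> leq p" using sum_rel_restrict a b by blast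
  moreover have "a \<noteq> b"
  proof
    assume "a = b"
    then have "a = ?c" using assms(2) ac cb by (simp add: antisymD)
    then show False using index_unique a c pq by auto
  qed
  ultimately show "(a, b) \<in> leq p \<and> a \<noteq> b" by simp
qed

lemma interchange_le:
  assumes interchange and "q \<le> q'" and "q \<le> r'" and b: "b \<in> A q"
  shows "(phi q' (sup q' r') (psi q q' b), psi r' (sup q' r') (phi q r' b)) \<in> leq (sup q' r')"
proof (cases "q = q' \<or> q = r'")
  case True
  then show ?thesis
    using assms phi_id psi_id phi_maps psi_maps leq_refl
    by (auto simp: sup_absorb1 sup_absorb2)
next
  case False
  then show ?thesis using assms unfolding interchange_def by (simp add: less_le)
qed

lemma psi_le_phi:
  "interchange \<Longrightarrow> p \<le> q \<Longrightarrow> a \<in> A p \<Longrightarrow> (psi p q a, phi p q a) \<in> leq q"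
  using interchange_le[of p q q a] phi_id psi_id phi_maps psi_maps by simp

lemma separating_le:
  assumes separating and "p \<le> q" and "a \<in> A p" and "b \<in> A p"
    and "(phi p q a, psi p q b) \<in> leq q"
  shows "(a, b) \<in> leq p"
  using assms phi_id psi_id unfolding separating_def by (cases "p = q") (auto simp: less_le)

lemma trans_sum_rel:
  assumes interchange and separating
  shows "trans R"
proof (rule transI)
  fix a b c assume ab: "(a, b) \<in> R" and bc: "(b, c) \<in> R"
  then obtain p q r where a: "a \<in> A p" and b: "b \<in> A q" and c: "c \<in> A r"
    unfolding sum_rel_def by blast
  define u where "u = sup (sup p q) (sup q r)"
  have le: "p \<le> sup p q" "q \<le> sup p q" "q \<le> sup q r" "r \<le> sup q r"
    "sup p q \<le> u" "sup q r \<le> u" "sup p r \<le> u" "p \<le> sup p r" "r \<le> sup p r"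
    unfolding u_def by (auto intro: le_supI1 le_supI2)
  note leq_trans[trans]
  have "(phi p u a, phi (sup p q) u (psi q (sup p q) b)) \<in> leq u"
    using phi_mono[OF le(5) _ _ ab[unfolded sum_rel_iff[OF a b]]] phi_comp[OF le(1,5) a]
      phi_maps psi_maps le a b by simp
  also have "(phi (sup p q) u (psi q (sup p q) b), psi (sup q r) u (phi q (sup q r) b)) \<in> leq u"
    using interchange_le[OF assms(1) le(2,3) b] u_def by simp
  also have "(psi (sup q r) u (phi q (sup q r) b), psi r u c) \<in> leq u"
    using psi_mono[OF le(6) _ _ bc[unfolded sum_rel_iff[OF b c]]] psi_comp[OF le(4,6) c]
      phi_maps psi_maps le b c by simp
  finally have "(phi (sup p r) u (phi p (sup p r) a), psi (sup p r) u (psi r (sup p r) c)) \<in> leq u"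
    using phi_comp[OF le(8,7) a] psi_comp[OF le(9,7) c] by simp
  then have "(phi p (sup p r) a, psi r (sup p r) c) \<in> leq (sup p r)"
    using separating_le[OF assms(2) le(7)] phi_maps psi_maps le a c by simp
  then show "(a, c) \<in> R" using sum_rel_iff[OF a c] by simp
qed

lemma sum_rel_cycle_index_le:
  assumes interchange and separating
    and ab: "(a, b) \<in> R" and ba: "(b, a) \<in> R" and a: "a \<in> A p" and b: "b \<in> A q"
  shows "q \<le> p"
proof (rule ccontr)
  assume "\<not> q \<le> p"
  then have p_less: "p < sup p q" by (metis less_le sup.cobounded1 sup.orderI sup_commute)
  note leq_trans[trans]
  have "(phi p (sup p q) a, psi q (sup p q) b) \<in> leq (sup p q)"
    using ab sum_rel_iff[OF a b] by simp
  also have "(psi q (sup p q) b, phi q (sup p q) b) \<in> leq (sup p q)"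
    using psi_le_phi[OF assms(1) _ b] by simp
  also have "(phi q (sup p q) b, psi p (sup p q) a) \<in> leq (sup p q)"
    using ba sum_rel_iff[OF b a] by (simp add: sup_commute)
  finally show False
    using assms(2) p_less a unfolding separating_def by blast
qed

lemma antisym_sum_rel:
  assumes interchange and separating
  shows "antisym R"
proof (rule antisymI)
  fix a b assume ab: "(a, b) \<in> R" and ba: "(b, a) \<in> R"
  then obtain p q where a: "a \<in> A p" and b: "b \<in> A q"
    unfolding sum_rel_def by blast
  have "p = q"
    using sum_rel_cycle_index_le[OF assms ab ba a b] sum_rel_cycle_index_le[OF assms ba ab b a]
    by simp
  then show "a = b"
    using ab ba a b sum_rel_restrict leq_antisym by blast
qed

theorem partial_order_on_sum_rel_iff:
  "partial_order_on (\<Union>p. A p) R \<longleftrightarrow> interchange \<and> separating"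
  using sum_rel_field refl_on_sum_rel trans_sum_rel antisym_sum_rel
    interchange_if_trans separating_if_trans_antisym
  unfolding partial_order_on_def preorder_on_def by blast

end

theorem theorem5p1:
  fixes A :: "'i::semilattice_sup \<Rightarrow> 'a set"
    and leq :: "'i \<Rightarrow> ('a \<times> 'a) set"
    and phi psi :: "'i \<Rightarrow> 'i \<Rightarrow> 'a \<Rightarrow> 'a"
  assumes posets: "\<And>p. partial_order_on (A p) (leq p)"
    and disjoint: "\<And>p q. p \<noteq> q \<Longrightarrow> A p \<inter> A q = {}"
    and phi_maps: "\<And>p q a. p \<le> q \<Longrightarrow> a \<in> A p \<Longrightarrow> phi p q a \<in> A q"
    and psi_maps: "\<And>p q a. p \<le> q \<Longrightarrow> a \<in> A p \<Longrightarrow> psi p q a \<in> A q"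
    and phi_mono: "\<And>p q a b. p \<le> q \<Longrightarrow> a \<in> A p \<Longrightarrow> b \<in> A p \<Longrightarrow> (a, b) \<in> leq p
                     \<Longrightarrow> (phi p q a, phi p q b) \<in> leq q"
    and psi_mono: "\<And>p q a b. p \<le> q \<Longrightarrow> a \<in> A p \<Longrightarrow> b \<in> A p \<Longrightarrow> (a, b) \<in> leq p
                     \<Longrightarrow> (psi p q a, psi p q b) \<in> leq q"
    and phi_id: "\<And>p a. a \<in> A p \<Longrightarrow> phi p p a = a"
    and psi_id: "\<And>p a. a \<in> A p \<Longrightarrow> psi p p a = a"
    and phi_comp: "\<And>p q r a. p \<le> q \<Longrightarrow> q \<le> r \<Longrightarrow> a \<in> A p
                     \<Longrightarrow> phi q r (phi p q a) = phi p r a"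
    and psi_comp: "\<And>p q r a. p \<le> q \<Longrightarrow> q \<le> r \<Longrightarrow> a \<in> A p
                     \<Longrightarrow> psi q r (psi p q a) = psi p r a"
  shows "(partial_order_on (\<Union>p. A p) (sum_rel A leq phi psi) \<and>
          (\<forall>p. sum_rel A leq phi psi \<inter> (A p \<times> A p) = leq p))
     \<longleftrightarrow>
         ((\<forall>p q r a. p < q \<longrightarrow> p < r \<longrightarrow> a \<in> A p \<longrightarrow>
             (phi q (sup q r) (psi p q a), psi r (sup q r) (phi p r a)) \<in> leq (sup q r)) \<and>
          (\<forall>p q a b. p < q \<longrightarrow> a \<in> A p \<longrightarrow> b \<in> A p \<longrightarrow>
             (phi p q a, psi p q b) \<in> leq q \<longrightarrow> (a, b) \<in> leq p \<and> a \<noteq> b))"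
proof -
  interpret directed_poset_family A leq phi psi
    by unfold_locales (fact assms)+
  show ?thesis
    using partial_order_on_sum_rel_iff sum_rel_restrict
    unfolding interchange_def separating_def by blast
qed

end
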